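(* For real $x>0$ let \[ S(x)=\int_0^\infty\frac{2\arctan(t/x)}{e^{2\pi t}-1}\,dt. \] Let $p\in(1,\infty)\setminus\{2\}$ and $\frac1p+\frac1{p'}=1$. Then for every $k\in\mathbb N$, \[ S(k)-\frac1pS(kp/2)-\frac1{p'}S(kp'/2)<0, \] and $\lim_{k\to\infty}\left(S(k)-\frac1pS(kp/2)-\frac1{p'}S(kp'/2)\right)=0$. *)

theory Defs
  imports "HOL-Analysis.Analysis"
begin

text \<open>Binet-type integral S(x) = int_0^infty 2 arctan(t/x) / (e^(2 pi t) - 1) dt,
  taken as a Lebesgue integral over (0, infty) (integrand is nonnegative and integrable for x > 0).\<close>
definition S :: "real \<Rightarrow> real" where
  "S x = (LBINT t:{0<..}. 2 * arctan (t / x) / (exp (2 * pi * t) - 1))"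

end

theory Submission
  imports Defs "HOL-Probability.Sinc_Integral"
begin

text \<open>Put \<open>q = 1/p\<close> (so \<open>1/p' = 1 - q\<close>) and \<open>a = 2t/x\<close>. At the point \<open>t\<close>, the integrand of
  \<open>S x - S (x p/2)/p - S (x p'/2)/p'\<close> is \<open>2 / (exp (2 \<pi> t) - 1)\<close> times
  \<open>arctan (a/2) - (q arctan (a q) + (1 - q) arctan (a (1 - q)))\<close>, which is negative because
  \<open>r \<mapsto> r arctan (a r)\<close> is strictly convex and \<open>1/2\<close> is the midpoint of \<open>q\<close> and \<open>1 - q\<close>.
  For the limit, \<open>arctan y \<le> y\<close> and \<open>t / (exp (2 \<pi> t) - 1) \<le> exp (- \<pi> t)\<close> give
  \<open>0 \<le> S x \<le> 2 / (\<pi> x)\<close>.\<close>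

lemma arctan_plus_frac_strict_mono:
  fixes x y :: real
  assumes "x < y"
  shows "arctan x + x / (1 + x\<^sup>2) < arctan y + y / (1 + y\<^sup>2)"
proof (rule DERIV_pos_imp_increasing[OF assms])
  fix u :: real
  have pos: "1 + u\<^sup>2 > 0"
    by (simp add: add_pos_nonneg)
  have "((\<lambda>u. arctan u + u / (1 + u\<^sup>2)) has_real_derivative
       inverse (1 + u\<^sup>2) + (1 + u\<^sup>2 - u * (2 * u)) / ((1 + u\<^sup>2) * (1 + u\<^sup>2))) (at u)"
    using pos by (auto intro!: derivative_eq_intros)
  also have "inverse (1 + u\<^sup>2) + (1 + u\<^sup>2 - u * (2 * u)) / ((1 + u\<^sup>2) * (1 + u\<^sup>2)) = 2 / (1 + u\<^sup>2)\<^sup>2"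
    using pos by (simp add: power2_eq_square divide_simps)
  finally show "\<exists>D. ((\<lambda>u. arctan u + u / (1 + u\<^sup>2)) has_real_derivative D) (at u) \<and> 0 < D"
    using pos by auto
qed

lemma arctan_half_lt_weighted:
  fixes a q :: real
  assumes "a > 0" and "q \<noteq> 1/2"
  shows "arctan (a / 2) < q * arctan (a * q) + (1 - q) * arctan (a * (1 - q))"
proof -
  \<comment> \<open>\<open>\<psi> r = \<phi> r + \<phi> (1 - r)\<close> for \<open>\<phi> r = r arctan (a r)\<close>, whose derivative \<open>g (a r)\<close> is
    strictly increasing; so \<open>\<psi>\<close> is symmetric about \<open>1/2\<close> and increasing to its right.\<close>
  define \<psi> where "\<psi> r = r * arctan (a * r) + (1 - r) * arctan (a * (1 - r))" for r
  define g where "g u = arctan u + u / (1 + u\<^sup>2)" for u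
  have \<psi>_deriv: "(\<psi> has_real_derivative g (a * r) - g (a * (1 - r))) (at r)" for r
  proof -
    have "1 + (a * r)\<^sup>2 > 0" "1 + (a * (1 - r))\<^sup>2 > 0"
      by (simp_all add: add_pos_nonneg)
    then show ?thesis
      unfolding \<psi>_def[abs_def] g_def by (auto intro!: derivative_eq_intros simp: divide_inverse)
  qed
  have \<psi>_gt: "\<psi> (1/2) < \<psi> r" if "r > 1/2" for r
  proof (rule DERIV_pos_imp_increasing_open[OF that])
    fix x assume "1/2 < x" "x < r"
    then have "g (a * (1 - x)) < g (a * x)"
      unfolding g_def using assms(1) by (intro arctan_plus_frac_strict_mono) simp
    then show "\<exists>D. (\<psi> has_real_derivative D) (at x) \<and> D > 0"
      using \<psi>_deriv[of x] by (intro exI[of _ "g (a * x) - g (a * (1 - x))"]) simp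
  next
    show "continuous_on {1/2..r} \<psi>"
      unfolding \<psi>_def by (intro continuous_intros)
  qed
  have "\<psi> (1/2) < \<psi> q"
  proof (cases "q > 1/2")
    case False
    with assms(2) have "\<psi> (1/2) < \<psi> (1 - q)"
      by (intro \<psi>_gt) simp
    also have "\<psi> (1 - q) = \<psi> q"
      unfolding \<psi>_def by simp
    finally show ?thesis .
  qed (rule \<psi>_gt)
  then show ?thesis
    unfolding \<psi>_def by simp
qed

definition S_integrand :: "real \<Rightarrow> real \<Rightarrow> real" where
  "S_integrand x t = 2 * arctan (t / x) / (exp (2 * pi * t) - 1)"

lemma S_eq_integral_S_integrand: "S x = (LBINT t:{0<..}. S_integrand x t)"
  unfolding S_def S_integrand_def ..

lemma div_exp_minus_one_le_exp:
  fixes t :: real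
  assumes "t > 0"
  shows "t / (exp (2 * pi * t) - 1) \<le> exp (- (t * pi))"
proof -
  define z where "z = exp (pi * t)"
  have z: "z > 0" "z \<ge> 1 + pi * t"
    unfolding z_def by (simp_all add: exp_ge_add_one_self)
  have "pi * t > 0"
    using assms by simp
  with z have "z \<ge> 1"
    by linarith
  have "t * z \<le> pi * t * z"
    using assms z(1) pi_gt3 by simp
  also have "\<dots> \<le> (z - 1) * (z + 1)"
    using \<open>z \<ge> 1\<close> z by (intro mult_mono) auto
  finally have tz: "t * z \<le> z * z - 1"
    by (simp add: algebra_simps)
  have tz_pos: "t * z > 0"
    using assms z by simp
  have "exp (2 * pi * t) = z * z"
    unfolding z_def by (simp add: exp_add[symmetric])
  then have "t / (exp (2 * pi * t) - 1) \<le> t / (t * z)"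
    using assms z(1) tz tz_pos by (intro divide_left_mono mult_pos_pos) linarith+
  also have "\<dots> = exp (- (t * pi))"
    using assms unfolding z_def by (simp add: exp_minus field_simps)
  finally show ?thesis .
qed

lemma S_integrand_nonneg:
  assumes "x > 0" and "t > 0"
  shows "0 \<le> S_integrand x t"
  using assms unfolding S_integrand_def by simp

lemma S_integrand_le:
  assumes "x > 0" and "t > 0"
  shows "S_integrand x t \<le> 2 / x * exp (- (t * pi))"
proof -
  have "exp (2 * pi * t) - 1 > 0"
    using assms by simp
  then have "S_integrand x t \<le> 2 * (t / x) / (exp (2 * pi * t) - 1)"
    unfolding S_integrand_def using assms
    by (intro divide_right_mono mult_left_mono arctan_le_self) auto
  also have "\<dots> = 2 / x * (t / (exp (2 * pi * t) - 1))"
    by simp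
  also have "\<dots> \<le> 2 / x * exp (- (t * pi))"
    using assms by (intro mult_left_mono div_exp_minus_one_le_exp) auto
  finally show ?thesis .
qed

lemma set_integrable_S_integrand:
  assumes "x > 0"
  shows "set_integrable lborel {0<..} (S_integrand x)"
proof (rule set_integrable_bound)
  show "set_integrable lborel {0<..} (\<lambda>t. 2 / x * exp (- (t * pi)))"
    using integrable_I0i_exp_mscale[OF pi_gt_zero] by simp
  show "set_borel_measurable lborel {0<..} (S_integrand x)"
    unfolding set_borel_measurable_def S_integrand_def by measurable
  show "AE t in lborel. t \<in> {0<..} \<longrightarrow> norm (S_integrand x t) \<le> norm (2 / x * exp (- (t * pi)))"
    using assms S_integrand_nonneg S_integrand_le by (auto intro!: AE_I2)
qed

lemma S_nonneg:
  assumes "x > 0"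
  shows "0 \<le> S x"
  unfolding S_eq_integral_S_integrand set_lebesgue_integral_def
  using assms S_integrand_nonneg
  by (intro integral_nonneg_AE AE_I2) (simp split: split_indicator)

lemma S_le:
  assumes "x > 0"
  shows "S x \<le> 2 / (pi * x)"
proof -
  have "S x \<le> (LBINT t:{0<..}. 2 / x * exp (- (t * pi)))"
    unfolding S_eq_integral_S_integrand
    using assms S_integrand_le set_integrable_S_integrand integrable_I0i_exp_mscale[OF pi_gt_zero]
    by (intro set_integral_mono) auto
  also have "\<dots> = 2 / x * (LBINT t=ereal 0..\<infinity>. exp (- (t * pi)))"
    by (simp add: interval_integral_to_infinity_eq)
  also have "\<dots> = 2 / (pi * x)"
    using LBINT_I0i_exp_mscale[OF pi_gt_zero] by (simp add: zero_ereal_def)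
  finally show ?thesis .
qed

lemma S_tendsto_0: "(S \<longlongrightarrow> 0) at_top"
proof (rule tendsto_sandwich)
  show "\<forall>\<^sub>F x in at_top. 0 \<le> S x"
    using eventually_gt_at_top[of 0] by eventually_elim (rule S_nonneg)
  show "\<forall>\<^sub>F x in at_top. S x \<le> 2 / pi * inverse x"
    using eventually_gt_at_top[of 0] by eventually_elim (rule order_trans[OF S_le], simp_all add: field_simps)
  show "((\<lambda>x. 2 / pi * inverse x) \<longlongrightarrow> 0) at_top"
    by (intro tendsto_mult_right_zero tendsto_inverse_0_at_top filterlim_ident)
qed simp

lemma set_integral_neg:
  fixes h :: "'a \<Rightarrow> real"
  assumes h: "set_integrable M A h" and A: "A \<in> sets M" "emeasure M A \<noteq> 0"
    and neg: "\<And>x. x \<in> A \<Longrightarrow> h x < 0"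
  shows "(LINT x:A|M. h x) < 0"
proof (rule ccontr)
  assume "\<not> (LINT x:A|M. h x) < 0"
  define g where "g x = - (indicator A x * h x)" for x
  have g_int: "integrable M g"
    using h unfolding g_def set_integrable_def by simp
  have g_nonneg: "AE x in M. 0 \<le> g x"
    using neg by (intro AE_I2) (simp add: g_def less_imp_le split: split_indicator)
  have "integral\<^sup>L M g = - (LINT x:A|M. h x)"
    unfolding g_def set_lebesgue_integral_def by simp
  with \<open>\<not> (LINT x:A|M. h x) < 0\<close> integral_nonneg_AE[OF g_nonneg]
  have "integral\<^sup>L M g = 0"
    by linarith
  then have "AE x in M. g x = 0"
    using integral_nonneg_eq_0_iff_AE[OF g_int g_nonneg] by simp
  then have "AE x in M. x \<notin> A"
    by eventually_elim (auto simp: g_def split: split_indicator dest: neg)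
  then have "emeasure M A = 0"
    using A(1) sets.sets_into_space[OF A(1)] by (subst (asm) AE_iff_measurable[of A]) auto
  with A(2) show False ..
qed

lemma conjugate_exponent_pos:
  fixes p p' :: real
  assumes "p > 1" and "1 / p + 1 / p' = 1"
  shows "p' > 0"
proof -
  have "1 / p' = 1 - 1 / p"
    using assms(2) by simp
  also have "\<dots> > 0"
    using assms(1) by simp
  finally show ?thesis
    by simp
qed

lemma S_integrand_defect_neg:
  fixes p p' x t :: real
  assumes p: "p > 1" "p \<noteq> 2" "1 / p + 1 / p' = 1" and "x > 0" "t > 0"
  shows "S_integrand x t - 1 / p * S_integrand (x * p / 2) t - 1 / p' * S_integrand (x * p' / 2) t < 0"
proof -
  define q where "q = 1 / p"
  define a where "a = 2 * t / x"
  define E where "E = exp (2 * pi * t) - 1"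
  have q': "1 / p' = 1 - q"
    using p(3) unfolding q_def by simp
  have "q \<noteq> 1/2"
    using p unfolding q_def by (auto simp: field_simps)
  have "p' > 0"
    using p(1,3) by (rule conjugate_exponent_pos)
  have "t / (x * p' / 2) = a * (1 / p')"
    using \<open>x > 0\<close> \<open>p' > 0\<close> unfolding a_def by simp
  then have args: "t / x = a / 2" "t / (x * p / 2) = a * q" "t / (x * p' / 2) = a * (1 - q)"
    using \<open>x > 0\<close> \<open>p > 1\<close> unfolding q' unfolding a_def q_def by (simp_all add: field_simps)
  have "E > 0" "a > 0"
    using assms unfolding E_def a_def by simp_all
  have "S_integrand x t - 1 / p * S_integrand (x * p / 2) t - 1 / p' * S_integrand (x * p' / 2) t
      = 2 / E * (arctan (a / 2) - (q * arctan (a * q) + (1 - q) * arctan (a * (1 - q))))"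
    using \<open>E > 0\<close> unfolding S_integrand_def E_def[symmetric] args q' q_def[symmetric]
    by (simp add: field_simps)
  also have "\<dots> < 0"
    using \<open>E > 0\<close> arctan_half_lt_weighted[OF \<open>a > 0\<close> \<open>q \<noteq> 1/2\<close>]
    by (intro mult_pos_neg) simp_all
  finally show ?thesis .
qed

lemma S_defect_neg:
  fixes p p' x :: real
  assumes p: "p > 1" "p \<noteq> 2" "1 / p + 1 / p' = 1" and "x > 0"
  shows "S x - 1 / p * S (x * p / 2) - 1 / p' * S (x * p' / 2) < 0"
proof -
  have "p' > 0"
    using p(1,3) by (rule conjugate_exponent_pos)
  with \<open>x > 0\<close> p(1) have "x * p / 2 > 0" "x * p' / 2 > 0"
    by simp_all
  with \<open>x > 0\<close> have int: "set_integrable lborel {0<..} (S_integrand y)" if "y \<in> {x, x * p / 2, x * p' / 2}" for y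
    using that by (auto intro: set_integrable_S_integrand)
  have "S x - 1 / p * S (x * p / 2) - 1 / p' * S (x * p' / 2)
      = (LBINT t:{0<..}. S_integrand x t - 1 / p * S_integrand (x * p / 2) t - 1 / p' * S_integrand (x * p' / 2) t)"
    unfolding S_eq_integral_S_integrand using int by (simp add: set_integral_diff)
  also have "\<dots> < 0"
  proof (rule set_integral_neg)
    have "emeasure lborel {0::real<..1} \<le> emeasure lborel {0::real<..}"
      by (intro emeasure_mono) auto
    then show "emeasure lborel {0::real<..} \<noteq> 0"
      by auto
  qed (use int assms S_integrand_defect_neg in auto)
  finally show ?thesis .
qed

lemma S_tendsto_0_sequentially:
  assumes "c > 0"
  shows "(\<lambda>k. S (real k * c)) \<longlonglongrightarrow> 0"
  using assms by (intro filterlim_compose[OF S_tendsto_0] filterlim_at_top_mult_tendsto_pos[OF tendsto_const] filterlim_real_sequentially)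

theorem proposition3p1:
  fixes p p' :: real
  assumes "p > 1" and "p \<noteq> 2" and "1 / p + 1 / p' = 1"
  shows "(\<forall>k::nat. k \<ge> 1 \<longrightarrow>
            S (real k) - (1 / p) * S (real k * p / 2) - (1 / p') * S (real k * p' / 2) < 0)
       \<and> ((\<lambda>k::nat. S (real k) - (1 / p) * S (real k * p / 2) - (1 / p') * S (real k * p' / 2))
            \<longlonglongrightarrow> 0)"
proof
  show "\<forall>k::nat. k \<ge> 1 \<longrightarrow>
          S (real k) - (1 / p) * S (real k * p / 2) - (1 / p') * S (real k * p' / 2) < 0"
    using S_defect_neg[OF assms] by simp
  have "p' > 0"
    using assms(1,3) by (rule conjugate_exponent_pos)
  then have "(\<lambda>k. S (real k * 1) - 1 / p * S (real k * (p / 2)) - 1 / p' * S (real k * (p' / 2)))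
      \<longlonglongrightarrow> 0 - 1 / p * 0 - 1 / p' * 0"
    using assms by (intro tendsto_intros S_tendsto_0_sequentially) auto
  then show "(\<lambda>k. S (real k) - 1 / p * S (real k * p / 2) - 1 / p' * S (real k * p' / 2)) \<longlonglongrightarrow> 0"
    by (simp add: mult.assoc)
qed

end
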